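(* Let $W=\coprod_{a\in\mathcal{A}}W^a$ with the data described below satisfy axioms (A1)–(A3) below, let $\mathcal{F}$, $\mathcal{B}$ be linear maps as described below, and suppose the Jacobi identity hypothesis (J) below holds, with maps $f_\alpha=f^{a_1,a_2,a_3,a_4}_\alpha$, $g_\alpha=g^{a_1,a_2,a_3,a_4}_\alpha$, $h_\alpha=h^{a_1,a_2,a_3,a_4}_\alpha$. Then (locality) for all $a_1,\dots,a_4\in\mathcal{A}$, $w_{(a_i)}\in W^{a_i}$ ($i=1,2,3$), $w'_{(a_4)}\in(W^{a_4})'$, $\mathcal{Z}\in\coprod_{a_5}\mathcal{V}_{a_1a_5}^{a_4}\otimes\mathcal{V}_{a_2a_3}^{a_5}$ and $\alpha\in\mathbb{A}(a_1,a_2,a_3,a_4)$, there exist $n_1,n_2\in\mathbb{N}$ such that $$(x_1-x_2)^{n_1}\langle w'_{(a_4)},f_\alpha(w_{(a_1)},w_{(a_2)},w_{(a_3)},[\mathcal{Z}]_P;x_1,x_2)\rangle=(x_1-x_2)^{n_1}\langle w'_{(a_4)},g_\alpha(w_{(a_1)},w_{(a_2)},w_{(a_3)},\mathcal{B}([\mathcal{Z}]_P);x_1,x_2)\rangle,$$ $$(x_0+x_2)^{n_2}\langle w'_{(a_4)},f_\alpha(w_{(a_1)},w_{(a_2)},w_{(a_3)},[\mathcal{Z}]_P;x_0+x_2,x_2)\rangle=(x_0+x_2)^{n_2}\langle w'_{(a_4)},h_\alpha(w_{(a_1)},w_{(a_2)},w_{(a_3)},\mathcal{F}([\mathcal{Z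}]_P);x_0,x_2)\rangle.$$
   Context: Conventions: standard notions of vertex operator algebras, modules, intertwining operators, $L(n)$, graded duals $W'$. $\log z=\log|z|+i\arg z$, $0\le\arg z<2\pi$. $\delta(x)=\sum_{n\in\mathbb{Z}}x^n$; negative powers of binomials are expanded in nonnegative powers of the second summand (e.g. $f(x_0+x_2,x_2)$ is expanded in nonnegative powers of $x_2$). Data: $W=\coprod_{a\in\mathcal{A}}W^a$, $\mathcal{A}$ finite containing $e$, a vertex operator algebra structure on $W^e$, $W^e$-module structures on all $W^a$, subspaces $\mathcal{V}_{a_1a_2}^{a_3}$ of intertwining operators of type $\binom{W^{a_3}}{W^{a_1}W^{a_2}}$. (A1) $W^e$ adjoint; $\mathcal{V}_{ea}^a$ spanned by the vertex operator of $W^a$; $\mathcal{V}_{ea_1}^{a_2}=0$ if $a_1\ne a_2$. (A2) $L(0)$-eigenvalues on $W^a$ lie in $h_a+\mathbb{Z}$, $h_a\in\mathbb{R}$. (A3) products $\langle w',\mathcal{Y}_1(w_{(a_1)},x_1)\cdots\mathcal{Y}_m(w_{(a_m)},x_m)w\rangle|_{x_i^n=e^{n\log z_i}}$, $\mathcal{Y}_i\in\mathcal{V}_{a_ib_{i+1}}^{b_i}$, converge absolutely on $|z_1|>\cdots>|z_m|>0$ and extend to multivalued analytic functions on $\{z_i\ne0,z_i\ne z_j\}$ with regular-singular-type expansions near $z_i=0,\infty$, $z_i=z_j$; iterates $\langle w',\mathcal{Y}_2(\mathcal{Y}_1(w_{(a_1)},x_0)w_{(a_2)},x_2)w_{(a_3)}\rangle|_{x_0^n=e^{n\log(z_1-z_2)},x_2^n=e^{n\log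 z_2}}$ converge absolutely on $|z_2|>|z_1-z_2|>0$. $\mathbf{P}$: linear map on $\coprod_{a_1..a_5}\mathcal{V}_{a_1a_5}^{a_4}\otimes\mathcal{V}_{a_2a_3}^{a_5}$ with $(\mathbf{P}(\mathcal{Y}_1\otimes\mathcal{Y}_2))(w_{(b_1)},w_{(b_2)},w_{(b_3)};x_1,x_2)=\mathcal{Y}_1(w_{(b_1)},x_1)\mathcal{Y}_2(w_{(b_2)},x_2)w_{(b_3)}$ if $(b_1,b_2,b_3)=(a_1,a_2,a_3)$, else $0$; $\mathbf{I}$: linear map on $\coprod\mathcal{V}_{a_1a_2}^{a_5}\otimes\mathcal{V}_{a_5a_3}^{a_4}$ with $(\mathbf{I}(\mathcal{Y}_1\otimes\mathcal{Y}_2))(w_{(b_1)},w_{(b_2)},w_{(b_3)};x_0,x_2)=\mathcal{Y}_2(\mathcal{Y}_1(w_{(b_1)},x_0)w_{(b_2)},x_2)w_{(b_3)}$ if $(b_1,b_2,b_3)=(a_1,a_2,a_3)$, else $0$. $\pi_P,\pi_I$: projections to the quotients by the kernels; $[\mathcal{Z}]_P=\pi_P(\mathcal{Z})$; $\tilde{\mathbf{P}},\tilde{\mathbf{I}}$: induced maps on quotients. $\mathcal{F}$: a linear map from the $\mathbf{P}$-quotient to the $\mathbf{I}$-quotient sending $\pi_P(\coprod_{a_5}\mathcal{V}_{a_1a_5}^{a_4}\otimes\mathcal{V}_{a_2a_3}^{a_5})$ into $\pi_I(\coprod_{a_5}\mathcal{V}_{a_1a_2}^{a_5}\otimes\mathcal{V}_{a_5a_3}^{a_4})$;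 $\mathcal{B}$: a linear map of the $\mathbf{P}$-quotient to itself sending $\pi_P(\coprod_{a_5}\mathcal{V}_{a_1a_5}^{a_4}\otimes\mathcal{V}_{a_2a_3}^{a_5})$ into $\pi_P(\coprod_{a_5}\mathcal{V}_{a_2a_5}^{a_4}\otimes\mathcal{V}_{a_1a_3}^{a_5})$ (in the paper: fusing and braiding isomorphisms). $\mathbb{G}^{a_1,a_2,a_3,a_4}$, its fixed basis $\{e_\alpha\}_{\alpha\in\mathbb{A}(a_1,\dots,a_4)}$ and the maps $\iota_{12},\iota_{21},\iota_{20}$: with $M^2=\{z_1,z_2\ne0,z_1\ne z_2\}$, $R_1,R_2$ the regions $|z_1|>|z_2|>0$, $|z_2|>|z_1|>0$ minus points with $z_1\in[0,\infty)$ or $z_2\in[0,\infty)$, $R_3$ the region $|z_2|>|z_1-z_2|>0$ minus points with $z_2$ or $z_1-z_2\in[0,\infty)$, $R_4$ the region $|z_1|>|z_1-z_2|>0$ minus points with $z_1$ or $z_2-z_1\in[0,\infty)$: $\mathbb{G}^{a_1,\dots,a_4}$ consists of multivalued analytic functions on $M^2$ with a chosen (preferred) branch on $R_1$ whose branches on $|z_1|>|z_2|>0$, $|z_2|>|z_1|>0$, $|z_2|>|z_1-z_2|>0$ expand as $\sum_a z_1^{h_{a_4}-h_{a_1}-h_a}z_2^{h_a-h_{a_2}-h_{a_3}}F_a$, $\sum_a z_2^{h_{a_4}-h_{a_2}-h_a}z_1^{h_a-h_{a_1}-h_{a_3}}G_a$, $\sum_a z_2^{h_{a_4}-h_a-h_{a_3}}(z_1-z_2)^{h_a-h_{a_1}-h_{a_2}}H_a$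 with $F_a\in\mathbb{C}[[z_2/z_1]][z_1^{\pm1},z_2^{\pm1}]$, $G_a\in\mathbb{C}[[z_1/z_2]][z_1^{\pm1},z_2^{\pm1}]$, $H_a\in\mathbb{C}[[(z_1-z_2)/z_2]][z_2^{\pm1},(z_1-z_2)^{\pm1}]$; preferred branches on $R_3,R_4$ are continuations of the $R_1$ one through $S_1=\{\mathrm{Re}\,z_1>\mathrm{Re}\,z_2>\mathrm{Re}(z_1-z_2)>0,\mathrm{Im}\,z_1>\mathrm{Im}\,z_2>\mathrm{Im}(z_1-z_2)>0\}$, and on $R_2$ the continuation of the $R_4$ one through $S_2=\{\mathrm{Re}\,z_2>\mathrm{Re}\,z_1>\mathrm{Re}(z_2-z_1)>0,\mathrm{Im}\,z_2>\mathrm{Im}\,z_1>\mathrm{Im}(z_2-z_1)>0\}$. It is a free module over $\mathbb{C}[x_1^{\pm1},x_2^{\pm1},(x_1-x_2)^{-1}]$ with a fixed basis $e_\alpha$; $\iota_{12},\iota_{21},\iota_{20}$ give the formal expansions of the preferred branches on $R_1,R_2,R_3$ (variables $x_1,x_2$; $x_1,x_2$; $x_0=z_1-z_2,x_2$). (J) There exist linear maps $f_\alpha:W^{a_1}\otimes W^{a_2}\otimes W^{a_3}\otimes\pi_P(\coprod_{a_5}\mathcal{V}_{a_1a_5}^{a_4}\otimes\mathcal{V}_{a_2a_3}^{a_5})\to W^{a_4}[[x_2/x_1]][x_1^{\pm1},x_2^{\pm1}]$, $g_\alpha:W^{a_1}\otimes W^{a_2}\otimes W^{a_3}\otimes\pi_P(\coprod_{a_5}\mathcal{V}_{a_2a_5}^{a_4}\otimes\mathcal{V}_{a_1a_3}^{a_5})\to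 W^{a_4}[[x_1/x_2]][x_1^{\pm1},x_2^{\pm1}]$, $h_\alpha:W^{a_1}\otimes W^{a_2}\otimes W^{a_3}\otimes\pi_I(\coprod_{a_5}\mathcal{V}_{a_1a_2}^{a_5}\otimes\mathcal{V}_{a_5a_3}^{a_4})\to W^{a_4}[[x_0/x_2]][x_0^{\pm1},x_2^{\pm1}]$ such that for all $w_{(a_i)}$ and $\mathcal{Z}\in\coprod_{a_5}\mathcal{V}_{a_1a_5}^{a_4}\otimes\mathcal{V}_{a_2a_3}^{a_5}$: only finitely many of $f_\alpha(\dots,[\mathcal{Z}]_P)$, $g_\alpha(\dots,\mathcal{B}([\mathcal{Z}]_P))$, $h_\alpha(\dots,\mathcal{F}([\mathcal{Z}]_P))$ are nonzero; $(\tilde{\mathbf{P}}([\mathcal{Z}]_P))(w_{(a_1)},w_{(a_2)},w_{(a_3)};x_1,x_2)=\sum_\alpha f_\alpha(w_{(a_1)},w_{(a_2)},w_{(a_3)},[\mathcal{Z}]_P;x_1,x_2)\iota_{12}(e_\alpha)$; $(\tilde{\mathbf{P}}(\mathcal{B}([\mathcal{Z}]_P)))(w_{(a_2)},w_{(a_1)},w_{(a_3)};x_2,x_1)=\sum_\alpha g_\alpha(w_{(a_1)},w_{(a_2)},w_{(a_3)},\mathcal{B}([\mathcal{Z}]_P);x_1,x_2)\iota_{21}(e_\alpha)$; $(\tilde{\mathbf{I}}(\mathcal{F}([\mathcal{Z}]_P)))(w_{(a_1)},w_{(a_2)},w_{(a_3)};x_0,x_2)=\sum_\alpha h_\alpha(w_{(a_1)},w_{(a_2)},w_{(a_3)},\mathcal{F}([\mathcal{Z}]_P);x_0,x_2)\iota_{20}(e_\alpha)$;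 and $x_0^{-1}\delta(\frac{x_1-x_2}{x_0})f_\alpha(\dots;x_1,x_2)-x_0^{-1}\delta(\frac{x_2-x_1}{-x_0})g_\alpha(\dots;x_1,x_2)=x_2^{-1}\delta(\frac{x_1-x_0}{x_2})h_\alpha(\dots;x_0,x_2)$ for each $\alpha$. *)

theory Defs
  imports Complex_Main
begin

text \<open>Formal series in two variables with integer exponents and coefficients in an
abelian group are represented as functions  int => int => 'v : the value at (m, n) is the
coefficient of the monomial y1^m y2^n.\<close>

text \<open>W[[x2/x1]][x1^{+-1}, x2^{+-1}]: finite sums of x1^i x2^j F_{ij}(x2/x1) with F_{ij} a
power series; the term x1^i x2^j (x2/x1)^k is x1^(i-k) x2^(j+k).\<close>
definition ser_21 :: "(int \<Rightarrow> int \<Rightarrow> 'v::comm_monoid_add) \<Rightarrow> bool" where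
  "ser_21 f \<longleftrightarrow> (\<exists>S (c :: int \<times> int \<Rightarrow> nat \<Rightarrow> 'v). finite S \<and>
     (\<forall>m n. f m n = (\<Sum>(i, j)\<in>S. if m \<le> i \<and> n = j + (i - m) then c (i, j) (nat (i - m)) else 0)))"

text \<open>W[[y1/y2]][y1^{+-1}, y2^{+-1}]: finite sums of y1^i y2^j F_{ij}(y1/y2); the term
y1^i y2^j (y1/y2)^k is y1^(i+k) y2^(j-k).  Used for (y1,y2) = (x1,x2) and for
(y1,y2) = (x0,x2).\<close>
definition ser_12 :: "(int \<Rightarrow> int \<Rightarrow> 'v::comm_monoid_add) \<Rightarrow> bool" where
  "ser_12 f \<longleftrightarrow> (\<exists>S (c :: int \<times> int \<Rightarrow> nat \<Rightarrow> 'v). finite S \<and>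
     (\<forall>m n. f m n = (\<Sum>(i, j)\<in>S. if i \<le> m \<and> n = j - (m - i) then c (i, j) (nat (m - i)) else 0)))"

text \<open>Coefficient of x0^c x1^a x2^b in  x0^{-1} delta((x1-x2)/x0) f(x1,x2)
 = sum_n x0^{-n-1} (x1-x2)^n f(x1,x2), binomials expanded in nonnegative powers of x2.
The sum over k is finite when ser_21 f holds.\<close>
definition jac_P :: "(complex \<Rightarrow> 'v \<Rightarrow> 'v) \<Rightarrow> (int \<Rightarrow> int \<Rightarrow> 'v::ab_group_add) \<Rightarrow> int \<Rightarrow> int \<Rightarrow> int \<Rightarrow> 'v" where
  "jac_P s f c a b = (let n = - c - 1 in
     \<Sum>k\<in>{k::nat. f (a - n + int k) (b - int k) \<noteq> 0}.
        s ((-1) ^ k * ((of_int n :: complex) gchoose k)) (f (a - n + int k) (b - int k)))"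

text \<open>Coefficient of x0^c x1^a x2^b in  x0^{-1} delta((x2-x1)/(-x0)) g(x1,x2)
 = sum_n (-1)^n x0^{-n-1} (x2-x1)^n g(x1,x2), binomials expanded in nonnegative powers of x1.\<close>
definition jac_B :: "(complex \<Rightarrow> 'v \<Rightarrow> 'v) \<Rightarrow> (int \<Rightarrow> int \<Rightarrow> 'v::ab_group_add) \<Rightarrow> int \<Rightarrow> int \<Rightarrow> int \<Rightarrow> 'v" where
  "jac_B s g c a b = (let n = - c - 1 in
     \<Sum>k\<in>{k::nat. g (a - int k) (b - n + int k) \<noteq> 0}.
        s ((-1) powi n * (-1) ^ k * ((of_int n :: complex) gchoose k)) (g (a - int k) (b - n + int k)))"

text \<open>Coefficient of x0^c x1^a x2^b in  x2^{-1} delta((x1-x0)/x2) h(x0,x2)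
 = sum_n x2^{-n-1} (x1-x0)^n h(x0,x2), binomials expanded in nonnegative powers of x0.\<close>
definition jac_I :: "(complex \<Rightarrow> 'v \<Rightarrow> 'v) \<Rightarrow> (int \<Rightarrow> int \<Rightarrow> 'v::ab_group_add) \<Rightarrow> int \<Rightarrow> int \<Rightarrow> int \<Rightarrow> 'v" where
  "jac_I s h c a b =
     (\<Sum>k\<in>{k::nat. h (c - int k) (a + b + int k + 1) \<noteq> 0}.
        s ((-1) ^ k * ((of_int (a + int k) :: complex) gchoose k)) (h (c - int k) (a + b + int k + 1)))"

text \<open>(x1 - x2)^N F(x1,x2) for a complex two-variable series F.\<close>
definition mul_x1_minus_x2 :: "nat \<Rightarrow> (int \<Rightarrow> int \<Rightarrow> complex) \<Rightarrow> int \<Rightarrow> int \<Rightarrow> complex" where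
  "mul_x1_minus_x2 N F a b = (\<Sum>k\<le>N. (-1) ^ k * of_nat (N choose k) * F (a - int N + int k) (b - int k))"

text \<open>(x0 + x2)^N G(x0,x2) for a complex series G in (x0,x2).\<close>
definition mul_x0_plus_x2 :: "nat \<Rightarrow> (int \<Rightarrow> int \<Rightarrow> complex) \<Rightarrow> int \<Rightarrow> int \<Rightarrow> complex" where
  "mul_x0_plus_x2 N G c b = (\<Sum>k\<le>N. of_nat (N choose k) * G (c - int N + int k) (b - int k))"

text \<open>F(x0 + x2, x2) for a series F(x1,x2), with (x0+x2)^m expanded in nonnegative powers
of x2: coefficient of x0^c x2^b is sum_k binom(c+k,k) F_{c+k, b-k}.\<close>
definition subst_x0_plus_x2 :: "(int \<Rightarrow> int \<Rightarrow> complex) \<Rightarrow> int \<Rightarrow> int \<Rightarrow> complex" where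
  "subst_x0_plus_x2 F c b =
     (\<Sum>k\<in>{k::nat. F (c + int k) (b - int k) \<noteq> 0}. ((of_int (c + int k) :: complex) gchoose k) * F (c + int k) (b - int k))"

end

theory Submission
  imports Defs "HOL-Computational_Algebra.Formal_Power_Series"
begin

text \<open>Locality and associativity are coefficients of the Jacobi identity.  The series f is
truncated from above in x1, while g and h are truncated from below in their first variable.
Hence for N large the coefficient of x0^(-N-1) kills the h-term, and what remains says
(x1 - x2)^N f = (x1 - x2)^N g.  Likewise the coefficient of x1^(-N-1) kills the g-term, and
what remains says (x0 + x2)^N f(x0 + x2, x2) = (x0 + x2)^N h(x0, x2); on the f-side this needs
the Vandermonde identity to recombine the two binomial expansions.\<close>

lemma ser_21_first_index_bounded_above:
  fixes f :: "int \<Rightarrow> int \<Rightarrow> 'v::comm_monoid_add"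
  assumes "ser_21 f"
  obtains U where "\<And>m n. f m n \<noteq> 0 \<Longrightarrow> m \<le> U"
proof -
  obtain S and c :: "int \<times> int \<Rightarrow> nat \<Rightarrow> 'v" where S: "finite S"
    and f: "\<And>m n. f m n = (\<Sum>(i, j)\<in>S. if m \<le> i \<and> n = j + (i - m) then c (i, j) (nat (i - m)) else 0)"
    using assms unfolding ser_21_def by blast
  have "m \<le> Max (insert 0 (fst ` S))" if nz: "f m n \<noteq> 0" for m n
  proof -
    obtain p where p: "p \<in> S" "(\<lambda>(i, j). if m \<le> i \<and> n = j + (i - m) then c (i, j) (nat (i - m)) else 0) p \<noteq> 0"
      using nz f by (metis (no_types, lifting) sum.neutral)
    then have "m \<le> fst p" by (cases p) (auto split: if_splits)
    also have "fst p \<le> Max (insert 0 (fst ` S))" using S p(1) by (intro Max_ge) auto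
    finally show ?thesis .
  qed
  then show ?thesis using that by blast
qed

lemma ser_12_first_index_bounded_below:
  fixes f :: "int \<Rightarrow> int \<Rightarrow> 'v::comm_monoid_add"
  assumes "ser_12 f"
  obtains L where "\<And>m n. f m n \<noteq> 0 \<Longrightarrow> L \<le> m"
proof -
  obtain S and c :: "int \<times> int \<Rightarrow> nat \<Rightarrow> 'v" where S: "finite S"
    and f: "\<And>m n. f m n = (\<Sum>(i, j)\<in>S. if i \<le> m \<and> n = j - (m - i) then c (i, j) (nat (m - i)) else 0)"
    using assms unfolding ser_12_def by blast
  have "Min (insert 0 (fst ` S)) \<le> m" if nz: "f m n \<noteq> 0" for m n
  proof -
    obtain p where p: "p \<in> S" "(\<lambda>(i, j). if i \<le> m \<and> n = j - (m - i) then c (i, j) (nat (m - i)) else 0) p \<noteq> 0"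
      using nz f by (metis (no_types, lifting) sum.neutral)
    then have "fst p \<le> m" by (cases p) (auto split: if_splits)
    moreover have "Min (insert 0 (fst ` S)) \<le> fst p" using S p(1) by (intro Min_le) auto
    ultimately show ?thesis by simp
  qed
  then show ?thesis using that by blast
qed

lemma module_hom_sum_support:
  fixes p :: "'v::ab_group_add \<Rightarrow> 'r::comm_ring_1"
  assumes p: "module_hom s (*) p" and bound: "\<And>k. X k \<noteq> 0 \<Longrightarrow> k \<le> M"
  shows "p (\<Sum>k\<in>{k::nat. X k \<noteq> 0}. s (r k) (X k)) = (\<Sum>k\<le>M. r k * p (X k))"
proof -
  interpret p: module_hom s "(*)" p by (rule p)
  have "p (\<Sum>k\<in>{k. X k \<noteq> 0}. s (r k) (X k)) = (\<Sum>k\<in>{k. X k \<noteq> 0}. r k * p (X k))"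
    by (simp add: p.sum p.scale)
  also have "\<dots> = (\<Sum>k\<le>M. r k * p (X k))"
    by (rule sum.mono_neutral_left) (use bound in auto)
  finally show ?thesis .
qed

lemma sum_atMost_rev: "(\<Sum>k\<le>(N::nat). T k) = (\<Sum>k\<le>N. T (N - k))"
  by (rule sum.reindex_bij_witness[where i="\<lambda>k. N - k" and j="\<lambda>k. N - k"]) auto

lemma gbinomial_of_nat: "((of_nat N :: 'a::field_char_0) gchoose k) = of_nat (N choose k)"
  by (simp add: binomial_gbinomial)

lemma jac_P_coeff_x0_neg:
  assumes p: "module_hom s (*) p" and U: "\<And>m n. f m n \<noteq> 0 \<Longrightarrow> m \<le> U"
  shows "p (jac_P s f (- int N - 1) a b) = mul_x1_minus_x2 N (\<lambda>m n. p (f m n)) a b"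
proof -
  have "p (jac_P s f (- int N - 1) a b)
      = (\<Sum>k\<le>max N (nat (U - a + int N)). (-1) ^ k * of_nat (N choose k) * p (f (a - int N + int k) (b - int k)))"
    unfolding jac_P_def Let_def by (simp add: gbinomial_of_nat, rule module_hom_sum_support[OF p]) (use U in force)
  also have "\<dots> = mul_x1_minus_x2 N (\<lambda>m n. p (f m n)) a b"
    unfolding mul_x1_minus_x2_def by (rule sum.mono_neutral_right) auto
  finally show ?thesis .
qed

lemma jac_B_coeff_x0_neg:
  assumes p: "module_hom s (*) p" and L: "\<And>m n. g m n \<noteq> 0 \<Longrightarrow> L \<le> m"
  shows "p (jac_B s g (- int N - 1) a b) = mul_x1_minus_x2 N (\<lambda>m n. p (g m n)) a b"
proof -
  have "p (jac_B s g (- int N - 1) a b)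
      = (\<Sum>k\<le>max N (nat (a - L)). (-1) ^ N * (-1) ^ k * of_nat (N choose k) * p (g (a - int k) (b - int N + int k)))"
    unfolding jac_B_def Let_def
    by (simp add: gbinomial_of_nat, rule module_hom_sum_support[OF p]) (use L in force)
  also have "\<dots> = (\<Sum>k\<le>N. (-1) ^ N * (-1) ^ k * of_nat (N choose k) * p (g (a - int k) (b - int N + int k)))"
    by (rule sum.mono_neutral_right) auto
  also have "\<dots> = (\<Sum>k\<le>N. (-1) ^ N * (-1) ^ (N - k) * of_nat (N choose (N - k)) * p (g (a - int (N - k)) (b - int N + int (N - k))))"
    by (rule sum_atMost_rev)
  also have "\<dots> = mul_x1_minus_x2 N (\<lambda>m n. p (g m n)) a b"
    unfolding mul_x1_minus_x2_def
  proof (rule sum.cong)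
    fix k assume "k \<in> {..N}"
    then obtain d where N: "N = k + d" using le_Suc_ex by auto
    have "(-1::complex) ^ N * (-1) ^ (N - k) = (-1) ^ k"
      by (simp add: N power_add mult.assoc flip: power_mult_distrib)
    moreover have "N choose (N - k) = N choose k"
      using binomial_symmetric[of k N] N by simp
    ultimately show "(-1) ^ N * (-1) ^ (N - k) * of_nat (N choose (N - k)) * p (g (a - int (N - k)) (b - int N + int (N - k)))
        = (-1) ^ k * of_nat (N choose k) * p (g (a - int N + int k) (b - int k))"
      using N by simp
  qed simp
  finally show ?thesis .
qed

lemma jac_I_eq_0_if_x0_low:
  assumes "\<And>m n. h m n \<noteq> 0 \<Longrightarrow> L \<le> m" and "c < L"
  shows "jac_I s h c a b = 0"
proof -
  have "{k::nat. h (c - int k) (a + b + int k + 1) \<noteq> 0} = {}"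
    using assms by force
  then show ?thesis unfolding jac_I_def by simp
qed

lemma jac_B_eq_0_if_x1_low:
  assumes "\<And>m n. g m n \<noteq> 0 \<Longrightarrow> L \<le> m" and "a < L"
  shows "jac_B s g c a b = 0"
proof -
  have "{k::nat. g (a - int k) (b - (- c - 1) + int k) \<noteq> 0} = {}"
    using assms by force
  then show ?thesis unfolding jac_B_def Let_def by simp
qed

lemma jac_I_coeff_x1_neg:
  assumes p: "module_hom s (*) p" and L: "\<And>m n. h m n \<noteq> 0 \<Longrightarrow> L \<le> m"
  shows "p (jac_I s h c (- int N - 1) b) = mul_x0_plus_x2 N (\<lambda>m n. p (h m n)) c b"
proof -
  have coeff: "(-1) ^ k * ((of_int (- int N - 1 + int k) :: complex) gchoose k) = of_nat (N choose k)" for k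
  proof -
    have "of_nat (N choose k) = (-1) ^ k * ((of_nat k - of_nat N - 1 :: complex) gchoose k)"
      using gbinomial_negated_upper[of "of_nat N :: complex" k] by (simp add: gbinomial_of_nat)
    also have "(of_nat k - of_nat N - 1 :: complex) = of_int (- int N - 1 + int k)" by simp
    finally show ?thesis by (rule sym)
  qed
  have arg: "- int N - 1 + b + int k + 1 = b - int N + int k" for k by simp
  have "p (jac_I s h c (- int N - 1) b)
      = (\<Sum>k\<le>max N (nat (c - L)). (-1) ^ k * ((of_int (- int N - 1 + int k) :: complex) gchoose k)
           * p (h (c - int k) (b - int N + int k)))"
    unfolding jac_I_def arg by (rule module_hom_sum_support[OF p]) (use L in force)
  also have "\<dots> = (\<Sum>k\<le>max N (nat (c - L)). of_nat (N choose k) * p (h (c - int k) (b - int N + int k)))"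
    by (simp only: coeff)
  also have "\<dots> = (\<Sum>k\<le>N. of_nat (N choose k) * p (h (c - int k) (b - int N + int k)))"
    by (rule sum.mono_neutral_right) auto
  also have "\<dots> = (\<Sum>k\<le>N. of_nat (N choose (N - k)) * p (h (c - int (N - k)) (b - int N + int (N - k))))"
    by (rule sum_atMost_rev)
  also have "\<dots> = mul_x0_plus_x2 N (\<lambda>m n. p (h m n)) c b"
    unfolding mul_x0_plus_x2_def
    by (rule sum.cong) (auto simp: binomial_symmetric[symmetric] algebra_simps)
  finally show ?thesis .
qed

lemma subst_x0_plus_x2_eq_sum_atMost:
  assumes "\<And>k. F (c + int k) (b - int k) \<noteq> 0 \<Longrightarrow> k \<le> M"
  shows "subst_x0_plus_x2 F c b = (\<Sum>k\<le>M. ((of_int (c + int k) :: complex) gchoose k) * F (c + int k) (b - int k))"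
  unfolding subst_x0_plus_x2_def by (rule sum.mono_neutral_left) (use assms in auto)

lemma jac_P_coeff_x1_neg:
  assumes p: "module_hom s (*) p" and U: "\<And>m n. f m n \<noteq> 0 \<Longrightarrow> m \<le> U"
  shows "p (jac_P s f c (- int N - 1) b) = subst_x0_plus_x2 (\<lambda>m n. p (f (m - int N) n)) c b"
proof -
  define M where "M = nat (U - c + int N)"
  have arg: "- int N - 1 - (- c - 1) + int k = c + int k - int N" for k by simp
  have bound: "k \<le> M" if "f (c + int k - int N) (b - int k) \<noteq> 0" for k
    using U[OF that] by (simp add: M_def)
  have coeff: "(-1) ^ k * ((of_int (- c - 1) :: complex) gchoose k) = (of_int (c + int k) gchoose k)" for k
  proof -
    have "(of_int (c + int k) :: complex) gchoose k = (-1) ^ k * ((of_nat k - of_int (c + int k) - 1) gchoose k)"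
      by (rule gbinomial_negated_upper)
    also have "(of_nat k - of_int (c + int k) - 1 :: complex) = of_int (- c - 1)" by simp
    finally show ?thesis by (rule sym)
  qed
  have "p (jac_P s f c (- int N - 1) b)
      = (\<Sum>k\<le>M. (-1) ^ k * ((of_int (- c - 1) :: complex) gchoose k) * p (f (c + int k - int N) (b - int k)))"
    unfolding jac_P_def Let_def arg by (rule module_hom_sum_support[OF p]) (rule bound)
  also have "\<dots> = (\<Sum>k\<le>M. (of_int (c + int k) gchoose k) * p (f (c + int k - int N) (b - int k)))"
    by (simp only: coeff)
  also have "\<dots> = subst_x0_plus_x2 (\<lambda>m n. p (f (m - int N) n)) c b"
    by (rule subst_x0_plus_x2_eq_sum_atMost[symmetric]) (metis bound module_hom.zero[OF p])
  finally show ?thesis .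
qed

lemma gbinomial_Vandermonde_choose:
  "(\<Sum>j\<le>t. of_nat (N choose j) * (z gchoose (t - j))) = ((z + of_nat N :: 'a::field_char_0) gchoose t)"
  using gbinomial_Vandermonde[of "of_nat N :: 'a" z t]
  by (simp add: atMost_atLeast0 gbinomial_of_nat add.commute)

text \<open>In series language: (x0 + x2)^N F(x0 + x2, x2) = (x1^N F)(x0 + x2, x2).\<close>
lemma mul_x0_plus_x2_subst_x0_plus_x2:
  fixes F :: "int \<Rightarrow> int \<Rightarrow> complex"
  assumes U: "\<And>m n. F m n \<noteq> 0 \<Longrightarrow> m \<le> U"
  shows "mul_x0_plus_x2 N (subst_x0_plus_x2 F) c b = subst_x0_plus_x2 (\<lambda>m n. F (m - int N) n) c b"
proof -
  define T where "T = nat (U - c + int N)"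
  define \<Phi> where "\<Phi> t = F (c - int N + int t) (b - int t)" for t
  have \<Phi>_eq_0: "\<Phi> t = 0" if "T < t" for t
    using U[of "c - int N + int t" "b - int t"] that unfolding \<Phi>_def T_def by linarith
  define G where "G j k = of_nat (N choose j) * ((of_int (c - int N + int j + int k) :: complex) gchoose k) * \<Phi> (j + k)"
    for j k
  have inner: "subst_x0_plus_x2 F (c - int N + int j) (b - int j)
      = (\<Sum>k\<le>T. ((of_int (c - int N + int j + int k) :: complex) gchoose k) * \<Phi> (j + k))" for j
    by (subst subst_x0_plus_x2_eq_sum_atMost[where M = T])
      (use U in \<open>force simp: T_def \<Phi>_def algebra_simps\<close>)+
  have "mul_x0_plus_x2 N (subst_x0_plus_x2 F) c b = (\<Sum>(j, k)\<in>{..N} \<times> {..T}. G j k)"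
    unfolding mul_x0_plus_x2_def inner sum_distrib_left G_def mult.assoc sum.cartesian_product ..
  also have "\<dots> = (\<Sum>(j, k)\<in>{(j, k). j + k \<le> N + T}. G j k)"
  proof (rule sum.mono_neutral_left)
    show "finite {(j, k). j + k \<le> N + T}"
      by (rule finite_subset[of _ "{..N + T} \<times> {..N + T}"]) auto
    show "\<forall>x\<in>{(j, k). j + k \<le> N + T} - {..N} \<times> {..T}. (case x of (j, k) \<Rightarrow> G j k) = 0"
      by (auto simp: G_def) (metis \<Phi>_eq_0 not_le trans_less_add2)
  qed auto
  also have "\<dots> = (\<Sum>t\<le>N + T. \<Sum>j\<le>t. G j (t - j))"
    by (rule sum.triangle_reindex_eq)
  also have "\<dots> = (\<Sum>t\<le>N + T. ((of_int (c + int t) :: complex) gchoose t) * \<Phi> t)"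
  proof (rule sum.cong)
    fix t :: nat
    have "(\<Sum>j\<le>t. G j (t - j)) = (\<Sum>j\<le>t. of_nat (N choose j) * ((of_int (c - int N + int t) :: complex) gchoose (t - j))) * \<Phi> t"
      unfolding sum_distrib_right by (rule sum.cong) (auto simp: G_def algebra_simps)
    also have "\<dots> = ((of_int (c + int t) :: complex) gchoose t) * \<Phi> t"
      by (simp add: gbinomial_Vandermonde_choose)
    finally show "(\<Sum>j\<le>t. G j (t - j)) = ((of_int (c + int t) :: complex) gchoose t) * \<Phi> t" .
  qed simp
  also have "\<dots> = subst_x0_plus_x2 (\<lambda>m n. F (m - int N) n) c b"
    by (subst subst_x0_plus_x2_eq_sum_atMost[where M = "N + T"])
      (use U in \<open>force simp: T_def \<Phi>_def algebra_simps\<close>)+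
  finally show ?thesis .
qed

lemma jacobi_imp_locality:
  assumes p: "module_hom s (*) p" and f: "ser_21 f" and g: "ser_12 g" and h: "ser_12 h"
    and jacobi: "\<And>c a b. jac_P s f c a b - jac_B s g c a b = jac_I s h c a b"
  shows "\<exists>N. mul_x1_minus_x2 N (\<lambda>m n. p (f m n)) = mul_x1_minus_x2 N (\<lambda>m n. p (g m n))"
proof -
  obtain U where U: "\<And>m n. f m n \<noteq> 0 \<Longrightarrow> m \<le> U"
    using ser_21_first_index_bounded_above[OF f] by blast
  obtain L where L: "\<And>m n. g m n \<noteq> 0 \<Longrightarrow> L \<le> m"
    using ser_12_first_index_bounded_below[OF g] by blast
  obtain L' where L': "\<And>m n. h m n \<noteq> 0 \<Longrightarrow> L' \<le> m"
    using ser_12_first_index_bounded_below[OF h] by blast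
  define N where "N = nat (- L')"
  have "mul_x1_minus_x2 N (\<lambda>m n. p (f m n)) a b = mul_x1_minus_x2 N (\<lambda>m n. p (g m n)) a b" for a b
  proof -
    have "- int N - 1 < L'" unfolding N_def by linarith
    with L' have "jac_I s h (- int N - 1) a b = 0" by (rule jac_I_eq_0_if_x0_low)
    then have "jac_P s f (- int N - 1) a b = jac_B s g (- int N - 1) a b"
      using jacobi[of "- int N - 1" a b] by simp
    then show ?thesis
      by (simp flip: jac_P_coeff_x0_neg[OF p U] jac_B_coeff_x0_neg[OF p L])
  qed
  then show ?thesis by blast
qed

lemma jacobi_imp_associativity:
  assumes p: "module_hom s (*) p" and f: "ser_21 f" and g: "ser_12 g" and h: "ser_12 h"
    and jacobi: "\<And>c a b. jac_P s f c a b - jac_B s g c a b = jac_I s h c a b"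
  shows "\<exists>N. mul_x0_plus_x2 N (subst_x0_plus_x2 (\<lambda>m n. p (f m n))) = mul_x0_plus_x2 N (\<lambda>m n. p (h m n))"
proof -
  obtain U where U: "\<And>m n. f m n \<noteq> 0 \<Longrightarrow> m \<le> U"
    using ser_21_first_index_bounded_above[OF f] by blast
  obtain L where L: "\<And>m n. g m n \<noteq> 0 \<Longrightarrow> L \<le> m"
    using ser_12_first_index_bounded_below[OF g] by blast
  obtain L' where L': "\<And>m n. h m n \<noteq> 0 \<Longrightarrow> L' \<le> m"
    using ser_12_first_index_bounded_below[OF h] by blast
  have pU: "m \<le> U" if "p (f m n) \<noteq> 0" for m n
    using U module_hom.zero[OF p] that by metis
  define N where "N = nat (- L)"
  have "mul_x0_plus_x2 N (subst_x0_plus_x2 (\<lambda>m n. p (f m n))) c b = mul_x0_plus_x2 N (\<lambda>m n. p (h m n)) c b" for c b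
  proof -
    have "- int N - 1 < L" unfolding N_def by linarith
    with L have "jac_B s g c (- int N - 1) b = 0" by (rule jac_B_eq_0_if_x1_low)
    then have "jac_P s f c (- int N - 1) b = jac_I s h c (- int N - 1) b"
      using jacobi[of c "- int N - 1" b] by simp
    then show ?thesis
      by (simp add: mul_x0_plus_x2_subst_x0_plus_x2[OF pU]
          flip: jac_P_coeff_x1_neg[OF p U] jac_I_coeff_x1_neg[OF p L'])
  qed
  then show ?thesis by blast
qed

theorem theorem3p4:
  fixes \<A> :: "'a set" and e :: 'a
    and W :: "'a \<Rightarrow> 'v::ab_group_add set"
    and scale :: "complex \<Rightarrow> 'v \<Rightarrow> 'v"
    and pair :: "'d \<Rightarrow> 'v \<Rightarrow> complex"
    and Zs :: "'a \<Rightarrow> 'a \<Rightarrow> 'a \<Rightarrow> 'a \<Rightarrow> 'z set"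
    and projP :: "'z \<Rightarrow> 'p"
    and B :: "'p \<Rightarrow> 'p" and F :: "'p \<Rightarrow> 'q"
    and Idx :: "'a \<Rightarrow> 'a \<Rightarrow> 'a \<Rightarrow> 'a \<Rightarrow> 'i set"
    and f :: "'a \<Rightarrow> 'a \<Rightarrow> 'a \<Rightarrow> 'a \<Rightarrow> 'i \<Rightarrow> 'v \<Rightarrow> 'v \<Rightarrow> 'v \<Rightarrow> 'p \<Rightarrow> int \<Rightarrow> int \<Rightarrow> 'v"
    and g :: "'a \<Rightarrow> 'a \<Rightarrow> 'a \<Rightarrow> 'a \<Rightarrow> 'i \<Rightarrow> 'v \<Rightarrow> 'v \<Rightarrow> 'v \<Rightarrow> 'p \<Rightarrow> int \<Rightarrow> int \<Rightarrow> 'v"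
    and h :: "'a \<Rightarrow> 'a \<Rightarrow> 'a \<Rightarrow> 'a \<Rightarrow> 'i \<Rightarrow> 'v \<Rightarrow> 'v \<Rightarrow> 'v \<Rightarrow> 'q \<Rightarrow> int \<Rightarrow> int \<Rightarrow> 'v"
  assumes fin_A: "finite \<A>" and e_in: "e \<in> \<A>"
    and mod: "module scale"
    and pair_lin: "\<And>w'. module_hom scale (*) (pair w')"
    and J_f_ser: "\<And>a1 a2 a3 a4 \<alpha> w1 w2 w3 Z. \<lbrakk>a1 \<in> \<A>; a2 \<in> \<A>; a3 \<in> \<A>; a4 \<in> \<A>; \<alpha> \<in> Idx a1 a2 a3 a4;
        w1 \<in> W a1; w2 \<in> W a2; w3 \<in> W a3; Z \<in> Zs a1 a2 a3 a4\<rbrakk>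
        \<Longrightarrow> ser_21 (f a1 a2 a3 a4 \<alpha> w1 w2 w3 (projP Z))"
    and J_g_ser: "\<And>a1 a2 a3 a4 \<alpha> w1 w2 w3 Z. \<lbrakk>a1 \<in> \<A>; a2 \<in> \<A>; a3 \<in> \<A>; a4 \<in> \<A>; \<alpha> \<in> Idx a1 a2 a3 a4;
        w1 \<in> W a1; w2 \<in> W a2; w3 \<in> W a3; Z \<in> Zs a1 a2 a3 a4\<rbrakk>
        \<Longrightarrow> ser_12 (g a1 a2 a3 a4 \<alpha> w1 w2 w3 (B (projP Z)))"
    and J_h_ser: "\<And>a1 a2 a3 a4 \<alpha> w1 w2 w3 Z. \<lbrakk>a1 \<in> \<A>; a2 \<in> \<A>; a3 \<in> \<A>; a4 \<in> \<A>; \<alpha> \<in> Idx a1 a2 a3 a4;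
        w1 \<in> W a1; w2 \<in> W a2; w3 \<in> W a3; Z \<in> Zs a1 a2 a3 a4\<rbrakk>
        \<Longrightarrow> ser_12 (h a1 a2 a3 a4 \<alpha> w1 w2 w3 (F (projP Z)))"
    and J_fin: "\<And>a1 a2 a3 a4 w1 w2 w3 Z. \<lbrakk>a1 \<in> \<A>; a2 \<in> \<A>; a3 \<in> \<A>; a4 \<in> \<A>;
        w1 \<in> W a1; w2 \<in> W a2; w3 \<in> W a3; Z \<in> Zs a1 a2 a3 a4\<rbrakk>
        \<Longrightarrow> finite {\<alpha> \<in> Idx a1 a2 a3 a4. f a1 a2 a3 a4 \<alpha> w1 w2 w3 (projP Z) \<noteq> (\<lambda>_ _. 0)}
          \<and> finite {\<alpha> \<in> Idx a1 a2 a3 a4. g a1 a2 a3 a4 \<alpha> w1 w2 w3 (B (projP Z)) \<noteq> (\<lambda>_ _. 0)}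
          \<and> finite {\<alpha> \<in> Idx a1 a2 a3 a4. h a1 a2 a3 a4 \<alpha> w1 w2 w3 (F (projP Z)) \<noteq> (\<lambda>_ _. 0)}"
    and J_jacobi: "\<And>a1 a2 a3 a4 \<alpha> w1 w2 w3 Z c a b. \<lbrakk>a1 \<in> \<A>; a2 \<in> \<A>; a3 \<in> \<A>; a4 \<in> \<A>; \<alpha> \<in> Idx a1 a2 a3 a4;
        w1 \<in> W a1; w2 \<in> W a2; w3 \<in> W a3; Z \<in> Zs a1 a2 a3 a4\<rbrakk>
        \<Longrightarrow> jac_P scale (f a1 a2 a3 a4 \<alpha> w1 w2 w3 (projP Z)) c a b
            - jac_B scale (g a1 a2 a3 a4 \<alpha> w1 w2 w3 (B (projP Z))) c a b
          = jac_I scale (h a1 a2 a3 a4 \<alpha> w1 w2 w3 (F (projP Z))) c a b"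
  shows "\<forall>a1\<in>\<A>. \<forall>a2\<in>\<A>. \<forall>a3\<in>\<A>. \<forall>a4\<in>\<A>. \<forall>w1\<in>W a1. \<forall>w2\<in>W a2. \<forall>w3\<in>W a3. \<forall>w'. \<forall>Z\<in>Zs a1 a2 a3 a4.
     \<forall>\<alpha>\<in>Idx a1 a2 a3 a4. \<exists>n1 n2 :: nat.
       mul_x1_minus_x2 n1 (\<lambda>m n. pair w' (f a1 a2 a3 a4 \<alpha> w1 w2 w3 (projP Z) m n))
         = mul_x1_minus_x2 n1 (\<lambda>m n. pair w' (g a1 a2 a3 a4 \<alpha> w1 w2 w3 (B (projP Z)) m n))
     \<and> mul_x0_plus_x2 n2 (subst_x0_plus_x2 (\<lambda>m n. pair w' (f a1 a2 a3 a4 \<alpha> w1 w2 w3 (projP Z) m n)))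
         = mul_x0_plus_x2 n2 (\<lambda>m n. pair w' (h a1 a2 a3 a4 \<alpha> w1 w2 w3 (F (projP Z)) m n))"
proof (intro ballI allI)
  fix a1 a2 a3 a4 w1 w2 w3 w' Z \<alpha>
  assume "a1 \<in> \<A>" "a2 \<in> \<A>" "a3 \<in> \<A>" "a4 \<in> \<A>" "\<alpha> \<in> Idx a1 a2 a3 a4"
    "w1 \<in> W a1" "w2 \<in> W a2" "w3 \<in> W a3" "Z \<in> Zs a1 a2 a3 a4"
  note J = J_f_ser[OF this] J_g_ser[OF this] J_h_ser[OF this] J_jacobi[OF this]
  show "\<exists>n1 n2 :: nat.
       mul_x1_minus_x2 n1 (\<lambda>m n. pair w' (f a1 a2 a3 a4 \<alpha> w1 w2 w3 (projP Z) m n))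
         = mul_x1_minus_x2 n1 (\<lambda>m n. pair w' (g a1 a2 a3 a4 \<alpha> w1 w2 w3 (B (projP Z)) m n))
     \<and> mul_x0_plus_x2 n2 (subst_x0_plus_x2 (\<lambda>m n. pair w' (f a1 a2 a3 a4 \<alpha> w1 w2 w3 (projP Z) m n)))
         = mul_x0_plus_x2 n2 (\<lambda>m n. pair w' (h a1 a2 a3 a4 \<alpha> w1 w2 w3 (F (projP Z)) m n))"
    using jacobi_imp_locality[OF pair_lin J] jacobi_imp_associativity[OF pair_lin J] by blast
qed

end
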